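(* Let $L$ be a finite field of characteristic $p$ and cardinality $q>2$, and let $f\colon L\to L$, $f(x)=x^s$, be a power permutation of $L$ (i.e. $\gcd(s,q-1)=1$) with exponent $s\equiv 1\pmod{p-1}$. Let $\ell$ be a prime. If the degree $[L:\mathbb{F}_p]$ is a power of $\ell$ and $p\not\equiv 2\pmod \ell$, then $\mathfrak{D}(f)\equiv 0\pmod \ell$.
   Context: Let $\mu$ be the canonical additive character of $L$, $\mu(x)=\exp(2i\pi\,\mathrm{Tr}(x)/p)$, where $\mathrm{Tr}$ is the trace of $L/\mathbb{F}_p$. The Fourier coefficient of $f$ at $a\in L$ is $\widehat{f}(a)=\sum_{x\in L}\mu(ax+f(x))$; under the hypothesis $s\equiv 1\pmod{p-1}$ these are rational integers. Define $\mathfrak{D}(f)=\prod_{a\in L^{\times}}\widehat{f}(a)$. *)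

theory Defs
  imports "HOL-Analysis.Analysis" "HOL-Computational_Algebra.Primes" "HOL-Number_Theory.Cong"
begin

definition field_degree :: "'a::finite_field itself \<Rightarrow> nat" where
  "field_degree _ = (THE n. CARD('a) = CHAR('a) ^ n)"

definition abs_trace :: "'a::finite_field \<Rightarrow> 'a" where
  "abs_trace x = (\<Sum>i < field_degree TYPE('a). x ^ (CHAR('a) ^ i))"

definition trace_nat :: "'a::finite_field \<Rightarrow> nat" where
  "trace_nat x = (THE k. k < CHAR('a) \<and> of_nat k = abs_trace x)"

definition can_char :: "'a::finite_field \<Rightarrow> complex" where
  "can_char x = exp (2 * of_real pi * \<i> * of_nat (trace_nat x) / of_nat CHAR('a))"

definition fourier_coeff :: "('a::finite_field \<Rightarrow> 'a) \<Rightarrow> 'a \<Rightarrow> complex" where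
  "fourier_coeff f a = (\<Sum>x\<in>UNIV. can_char (a * x + f x))"

definition frakD :: "('a::finite_field \<Rightarrow> 'a) \<Rightarrow> complex" where
  "frakD f = (\<Prod>a\<in>UNIV - {0}. fourier_coeff f a)"

end

theory Submission
  imports Defs "HOL-Computational_Algebra.Polynomial" "HOL-Combinatorics.Orbits"
begin

text \<open>
  Since \<open>s \<equiv> 1 (mod p - 1)\<close>, the power map satisfies \<open>f (c x) = c f x\<close> for every \<open>c\<close> in
  the prime field, hence so does \<open>x \<mapsto> a x + f x\<close>; the trace then takes each nonzero value of
  \<open>F\<^sub>p\<close> equally often, and the Fourier coefficient at \<open>a\<close> collapses to the integer
  \<open>N\<^sub>0(a) - N\<^sub>1(a)\<close>, where \<open>N\<^sub>c(a)\<close> counts the \<open>x\<close> with \<open>Tr (a x + x\<^sup>s) = c\<close>.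
  So it suffices that \<open>l\<close> divides \<open>N\<^sub>0(1) - N\<^sub>1(1)\<close>. The Frobenius \<open>x \<mapsto> x\<^sup>p\<close>
  permutes these level sets and its order divides \<open>[L : F\<^sub>p] = l\<^sup>k\<close>, so modulo \<open>l\<close>
  each count equals the number of its fixed points, i.e. of \<open>x \<in> F\<^sub>p\<close> with
  \<open>2 [L : F\<^sub>p] x = c\<close>: one for each \<open>c\<close> if \<open>2 [L : F\<^sub>p] \<noteq> 0\<close> in \<open>F\<^sub>p\<close>, and otherwise
  \<open>p = l\<close> and the counts are \<open>p\<close> and \<open>0\<close>.
\<close>

section \<open>The prime field\<close>

lemma frobenius_diff:
  "((x::'a::finite_field) - y) ^ CHAR('a) = x ^ CHAR('a) - y ^ CHAR('a)"
  using freshmans_dream[where x=x and y="-y"] minus_power_prime_CHAR[where x=y] by simp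

definition prime_subfield :: "'a::finite_field set" where
  "prime_subfield = {c. c ^ CHAR('a) = c}"

lemma of_nat_in_prime_subfield: "(of_nat j :: 'a::finite_field) \<in> prime_subfield"
proof (induction j)
  case (Suc j)
  then show ?case by (simp add: prime_subfield_def freshmans_dream add.commute[of 1])
qed (simp add: prime_subfield_def)

lemma zero_in_prime_subfield: "0 \<in> prime_subfield"
  and one_in_prime_subfield: "1 \<in> prime_subfield"
  using of_nat_in_prime_subfield[of 0] of_nat_in_prime_subfield[of 1] by simp_all

lemma prime_subfield_add: "c \<in> prime_subfield \<Longrightarrow> d \<in> prime_subfield \<Longrightarrow> c + d \<in> prime_subfield"
  and prime_subfield_diff: "c \<in> prime_subfield \<Longrightarrow> d \<in> prime_subfield \<Longrightarrow> c - d \<in> prime_subfield"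
  and prime_subfield_mult: "c \<in> prime_subfield \<Longrightarrow> d \<in> prime_subfield \<Longrightarrow> c * d \<in> prime_subfield"
  and prime_subfield_inverse: "c \<in> prime_subfield \<Longrightarrow> inverse c \<in> prime_subfield"
  for c d :: "'a::finite_field"
  by (simp_all add: prime_subfield_def freshmans_dream frobenius_diff power_mult_distrib power_inverse)

lemma prime_subfield_power_CHAR_power:
  "c \<in> prime_subfield \<Longrightarrow> (c::'a::finite_field) ^ (CHAR('a) ^ i) = c"
  by (induction i) (simp_all add: prime_subfield_def power_mult)

lemma card_prime_subfield_le: "card (prime_subfield :: 'a::finite_field set) \<le> CHAR('a)"
proof -
  define P :: "'a poly" where "P = monom 1 CHAR('a) + [:0, -1:]"
  have "CHAR('a) \<ge> 2" using prime_ge_2_nat by simp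
  then have deg: "degree P = CHAR('a)"
    unfolding P_def by (subst degree_add_eq_left) (simp_all add: degree_monom_eq)
  then have "P \<noteq> 0" by auto
  moreover have "{x. poly P x = 0} = prime_subfield"
    by (auto simp: P_def prime_subfield_def poly_monom)
  ultimately show ?thesis using card_poly_roots_bound[of P] deg by simp
qed

lemma prime_subfield_eq_of_nat_image:
  "(prime_subfield :: 'a::finite_field set) = of_nat ` {..<CHAR('a)}"
  and card_prime_subfield: "card (prime_subfield :: 'a::finite_field set) = CHAR('a)"
proof -
  have "inj_on (of_nat :: nat \<Rightarrow> 'a) {..<CHAR('a)}"
    by (auto simp: inj_on_def of_nat_eq_iff_cong_CHAR cong_def)
  then have card_range: "card (of_nat ` {..<CHAR('a)} :: 'a set) = CHAR('a)"
    by (simp add: card_image)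
  have "of_nat ` {..<CHAR('a)} = (prime_subfield :: 'a set)"
    using of_nat_in_prime_subfield card_prime_subfield_le[where 'a='a] card_range
    by (intro card_seteq) auto
  then show eq: "(prime_subfield :: 'a set) = of_nat ` {..<CHAR('a)}" ..
  show "card (prime_subfield :: 'a set) = CHAR('a)" using card_range by (simp add: eq)
qed

definition prime_subspace :: "'a::finite_field set \<Rightarrow> bool" where
  "prime_subspace S \<longleftrightarrow> 0 \<in> S \<and> (\<forall>x\<in>S. \<forall>y\<in>S. x + y \<in> S) \<and> (\<forall>c\<in>prime_subfield. \<forall>x\<in>S. c * x \<in> S)"

lemma prime_subspace_extend:
  fixes S :: "'a::finite_field set"
  assumes S: "prime_subspace S" and x: "x \<notin> S"
  defines "S' \<equiv> (\<lambda>(s, c). s + c * x) ` (S \<times> prime_subfield)"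
  shows "prime_subspace S'" and "card S' = card S * CHAR('a)" and "S \<subset> S'"
proof -
  have S0: "0 \<in> S" and Sadd: "\<And>a b. a \<in> S \<Longrightarrow> b \<in> S \<Longrightarrow> a + b \<in> S"
    and Sscale: "\<And>c a. c \<in> prime_subfield \<Longrightarrow> a \<in> S \<Longrightarrow> c * a \<in> S"
    using S unfolding prime_subspace_def by auto
  have "s \<in> S'" if "s \<in> S" for s
    unfolding S'_def by (rule image_eqI[where x="(s, 0)"]) (simp_all add: that zero_in_prime_subfield)
  moreover have "x \<in> S'"
    unfolding S'_def by (rule image_eqI[where x="(0, 1)"]) (simp_all add: S0 one_in_prime_subfield)
  ultimately show "S \<subset> S'" using x by auto
  show "prime_subspace S'"
    unfolding prime_subspace_def
  proof (intro conjI ballI)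
    show "0 \<in> S'" using \<open>S \<subset> S'\<close> S0 by blast
  next
    fix a b assume "a \<in> S'" "b \<in> S'"
    then obtain s c t d where "s \<in> S" "c \<in> prime_subfield" "t \<in> S" "d \<in> prime_subfield"
      and "a = s + c * x" "b = t + d * x"
      unfolding S'_def by force
    then show "a + b \<in> S'"
      unfolding S'_def using Sadd prime_subfield_add
      by (intro image_eqI[where x="(s + t, c + d)"]) (simp_all add: algebra_simps)
  next
    fix e a :: 'a assume "e \<in> prime_subfield" "a \<in> S'"
    then obtain s c where "s \<in> S" "c \<in> prime_subfield" "a = s + c * x"
      unfolding S'_def by force
    then show "e * a \<in> S'"
      unfolding S'_def using Sscale prime_subfield_mult \<open>e \<in> prime_subfield\<close>
      by (intro image_eqI[where x="(e * s, e * c)"]) (simp_all add: algebra_simps)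
  qed
  have "inj_on (\<lambda>(s, c). s + c * x) (S \<times> prime_subfield)"
  proof (rule inj_onI, clarify)
    fix s c t d
    assume st: "s \<in> S" "c \<in> prime_subfield" "t \<in> S" "d \<in> prime_subfield" "s + c * x = t + d * x"
    show "s = t \<and> c = d"
    proof (rule ccontr)
      assume "\<not> (s = t \<and> c = d)"
      with st(5) have cd: "c - d \<noteq> 0" by auto
      have "-1 \<in> prime_subfield"
        using prime_subfield_diff[OF zero_in_prime_subfield one_in_prime_subfield] by simp
      then have "t - s \<in> S" using Sadd[OF st(3) Sscale[OF _ st(1)], of "-1"] by simp
      moreover have "inverse (c - d) \<in> prime_subfield"
        using prime_subfield_inverse[OF prime_subfield_diff[OF st(2,4)]] .
      ultimately have "inverse (c - d) * (t - s) \<in> S" by (rule Sscale[rotated])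
      moreover have "inverse (c - d) * (t - s) = x"
        using st(5) cd by (simp add: field_simps)
      ultimately show False using x by simp
    qed
  qed
  then show "card S' = card S * CHAR('a)"
    by (simp add: S'_def card_image card_cartesian_product card_prime_subfield)
qed

lemma prime_subspace_card_power_imp_card_power:
  assumes "prime_subspace (S :: 'a::finite_field set)" and "card S = CHAR('a) ^ d"
  shows "\<exists>n. CARD('a) = CHAR('a) ^ n"
  using assms
proof (induction "CARD('a) - card S" arbitrary: S d rule: less_induct)
  case less
  show ?case
  proof (cases "S = UNIV")
    case False
    then obtain x where x: "x \<notin> S" by auto
    define S' where "S' = (\<lambda>(s, c). s + c * x) ` (S \<times> (prime_subfield :: 'a set))"
    note S' = prime_subspace_extend[OF less.prems(1) x, folded S'_def]
    have "card S < card S'" using S'(3) by (simp add: psubset_card_mono)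
    moreover have "card S' \<le> CARD('a)" by (simp add: card_mono)
    ultimately have "CARD('a) - card S' < CARD('a) - card S" by linarith
    then show ?thesis
      using less.hyps[of S' "Suc d"] S'(1,2) less.prems(2) by (simp add: mult.commute)
  qed (use less.prems in auto)
qed

lemma card_eq_CHAR_power_field_degree:
  "CARD('a::finite_field) = CHAR('a) ^ field_degree TYPE('a)"
proof -
  have "prime_subspace ({0} :: 'a set)" by (simp add: prime_subspace_def)
  then obtain n where n: "CARD('a) = CHAR('a) ^ n"
    using prime_subspace_card_power_imp_card_power[of "{0}" 0] by auto
  have "CHAR('a) > 1" using prime_gt_1_nat by simp
  with n have "(THE n. CARD('a) = CHAR('a) ^ n) = n"
    by (intro the_equality) (auto simp: power_inject_exp)
  then show ?thesis using n by (simp add: field_degree_def)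
qed

section \<open>The absolute trace\<close>

lemma power_card_eq_same: "(x::'a::finite_field) ^ (CHAR('a) ^ field_degree TYPE('a)) = x"
  using finite_field_power_card_eq_same[of x] by (simp add: card_eq_CHAR_power_field_degree)

lemma abs_trace_scale:
  "c \<in> prime_subfield \<Longrightarrow> abs_trace ((c::'a::finite_field) * x) = c * abs_trace x"
  unfolding abs_trace_def by (simp add: power_mult_distrib prime_subfield_power_CHAR_power sum_distrib_left)

lemma abs_trace_prime_subfield:
  "c \<in> prime_subfield \<Longrightarrow> abs_trace (c::'a::finite_field) = of_nat (field_degree TYPE('a)) * c"
  unfolding abs_trace_def by (simp add: prime_subfield_power_CHAR_power)

lemma abs_trace_power_CHAR: "abs_trace ((x::'a::finite_field) ^ CHAR('a)) = abs_trace x"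
proof -
  define n where "n = field_degree TYPE('a)"
  define f where "f i = x ^ (CHAR('a) ^ i)" for i
  have "abs_trace (x ^ CHAR('a)) = (\<Sum>i<n. f (Suc i))"
    unfolding abs_trace_def f_def n_def by (simp add: power_mult[symmetric] mult.commute)
  also have "\<dots> = (\<Sum>i<Suc n. f i) - f 0"
    by (simp only: sum.lessThan_Suc_shift) simp
  also have "\<dots> = (\<Sum>i<n. f i)"
    using power_card_eq_same[of x] by (simp add: f_def n_def)
  finally show ?thesis by (simp add: abs_trace_def f_def n_def)
qed

lemma abs_trace_in_prime_subfield: "abs_trace (x::'a::finite_field) \<in> prime_subfield"
proof -
  have "abs_trace x ^ CHAR('a) = abs_trace (x ^ CHAR('a))"
    unfolding abs_trace_def
    by (simp add: freshmans_dream_sum power_mult[symmetric] mult.commute)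
  then show ?thesis by (simp add: prime_subfield_def abs_trace_power_CHAR)
qed

lemma trace_nat_less: "trace_nat (y::'a::finite_field) < CHAR('a)"
  and of_nat_trace_nat: "of_nat (trace_nat y) = abs_trace y"
proof -
  obtain k where k: "k < CHAR('a)" "of_nat k = abs_trace y"
    using abs_trace_in_prime_subfield[of y] by (auto simp: prime_subfield_eq_of_nat_image)
  have "trace_nat y = k"
    unfolding trace_nat_def
  proof (rule the_equality)
    fix j assume "j < CHAR('a) \<and> of_nat j = abs_trace y"
    then have "j < CHAR('a)" "of_nat j = (of_nat k :: 'a)" using k by simp_all
    then show "j = k" using k(1) by (simp add: of_nat_eq_iff_cong_CHAR cong_def)
  qed (use k in simp)
  with k show "trace_nat y < CHAR('a)" "of_nat (trace_nat y) = abs_trace y" by simp_all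
qed

lemma trace_nat_eq_iff:
  "j < CHAR('a) \<Longrightarrow> trace_nat (y::'a::finite_field) = j \<longleftrightarrow> abs_trace y = of_nat j"
  using trace_nat_less[of y] of_nat_trace_nat[of y] by (auto simp: of_nat_eq_iff_cong_CHAR cong_def)

section \<open>Additive character sums\<close>

lemma sum_cis_roots_unity: "n > 1 \<Longrightarrow> (\<Sum>j<n. cis (2 * pi * real j / real n)) = 0"
proof -
  assume n: "n > 1"
  have "(\<Sum>j<n. cis (2 * pi * real j / real n)) = \<Sum>{z::complex. z ^ n = 1}"
    \<comment> \<open>qualified: HOL-Analysis reuses the name for an \<open>exp\<close>-based variant\<close>
    using n by (intro sum.reindex_bij_betw[where g="\<lambda>z. z"] Complex.bij_betw_roots_unity) simp
  then show ?thesis using sum_roots_unity[OF n] by simp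
qed

lemma sum_cis_roots_unity_weighted:
  fixes w :: "nat \<Rightarrow> complex"
  assumes "n > 1" and "\<And>j. 0 < j \<Longrightarrow> j < n \<Longrightarrow> w j = w 1"
  shows "(\<Sum>j<n. w j * cis (2 * pi * real j / real n)) = w 0 - w 1"
proof -
  define \<omega> where "\<omega> j = cis (2 * pi * real j / real n)" for j
  obtain m where n: "n = Suc m" using assms(1) by (cases n) auto
  have "(\<Sum>j<n. w j * \<omega> j) = (\<Sum>j<n. (w j - w 1) * \<omega> j) + w 1 * (\<Sum>j<n. \<omega> j)"
    by (simp add: algebra_simps sum.distrib sum_distrib_left sum_subtractf)
  also have "(\<Sum>j<n. \<omega> j) = 0"
    using sum_cis_roots_unity[OF assms(1)] by (simp add: \<omega>_def)
  also have "(\<Sum>j<n. (w j - w 1) * \<omega> j) = (w 0 - w 1) * \<omega> 0 + (\<Sum>j<m. (w (Suc j) - w 1) * \<omega> (Suc j))"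
    unfolding n by (rule sum.lessThan_Suc_shift)
  also have "(\<Sum>j<m. (w (Suc j) - w 1) * \<omega> (Suc j)) = 0"
  proof (rule sum.neutral, rule ballI)
    fix j assume "j \<in> {..<m}"
    then have "w (Suc j) = w 1" by (intro assms(2)) (simp_all add: n)
    then show "(w (Suc j) - w 1) * \<omega> (Suc j) = 0" by simp
  qed
  finally show ?thesis by (simp add: \<omega>_def)
qed

lemma can_char_eq_cis:
  "can_char (y::'a::finite_field) = cis (2 * pi * real (trace_nat y) / real CHAR('a))"
  by (simp add: can_char_def cis_conv_exp mult_ac)

definition trace_balance :: "('a::finite_field \<Rightarrow> 'a) \<Rightarrow> int" where
  "trace_balance g = int (card {x. abs_trace (g x) = 0}) - int (card {x. abs_trace (g x) = 1})"

lemma card_trace_level_prime_subfield: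
  fixes g :: "'a::finite_field \<Rightarrow> 'a"
  assumes hom: "\<And>c x. c \<in> prime_subfield \<Longrightarrow> c \<noteq> 0 \<Longrightarrow> g (c * x) = c * g x"
    and c: "c \<in> prime_subfield" "c \<noteq> 0"
  shows "card {x. abs_trace (g x) = c} = card {x. abs_trace (g x) = 1}"
proof -
  have level: "abs_trace (g (d * x)) = d * abs_trace (g x)"
    if "d \<in> prime_subfield" "d \<noteq> 0" for d x
    using that by (simp add: hom abs_trace_scale)
  have c': "inverse c \<in> prime_subfield" "inverse c \<noteq> 0"
    using c by (simp_all add: prime_subfield_inverse)
  have "(\<lambda>x. c * x) ` {x. abs_trace (g x) = 1} = {x. abs_trace (g x) = c}"
  proof (intro equalityI subsetI)
    fix y assume "y \<in> {x. abs_trace (g x) = c}"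
    then have "inverse c * y \<in> {x. abs_trace (g x) = 1}"
      using level[OF c'] c by simp
    moreover have "y = c * (inverse c * y)" using c by simp
    ultimately show "y \<in> (\<lambda>x. c * x) ` {x. abs_trace (g x) = 1}" by blast
  qed (use level[OF c] in auto)
  moreover have "inj (\<lambda>x. c * x)" using c by (auto intro: injI)
  ultimately show ?thesis by (metis card_image inj_on_subset subset_UNIV)
qed

lemma sum_can_char_homogeneous:
  fixes g :: "'a::finite_field \<Rightarrow> 'a"
  assumes hom: "\<And>c x. c \<in> prime_subfield \<Longrightarrow> c \<noteq> 0 \<Longrightarrow> g (c * x) = c * g x"
  shows "(\<Sum>x\<in>UNIV. can_char (g x)) = of_int (trace_balance g)"
proof -
  define p where "p = CHAR('a)"
  define N where "N j = card {x. abs_trace (g x) = (of_nat j :: 'a)}" for j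
  have "(\<Sum>x\<in>UNIV. can_char (g x))
      = (\<Sum>j<p. \<Sum>x\<in>{x\<in>UNIV. trace_nat (g x) = j}. cis (2 * pi * real (trace_nat (g x)) / real p))"
    unfolding can_char_eq_cis p_def by (rule sum.group[symmetric]) (auto simp: trace_nat_less)
  also have "\<dots> = (\<Sum>j<p. \<Sum>x\<in>{x. trace_nat (g x) = j}. cis (2 * pi * real j / real p))"
    by (intro sum.cong refl) auto
  also have "\<dots> = (\<Sum>j<p. of_nat (N j) * cis (2 * pi * real j / real p))"
    by (intro sum.cong refl) (simp add: N_def p_def trace_nat_eq_iff)
  also have "\<dots> = of_nat (N 0) - of_nat (N 1)"
  proof (rule sum_cis_roots_unity_weighted)
    show "p > 1" using prime_gt_1_nat by (simp add: p_def)
    fix j assume "0 < j" "j < p"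
    then have "(of_nat j :: 'a) \<noteq> 0"
      by (auto simp: p_def of_nat_eq_0_iff_char_dvd dest: dvd_imp_le)
    then show "of_nat (N j) = (of_nat (N 1) :: complex)"
      unfolding N_def using card_trace_level_prime_subfield[OF hom of_nat_in_prime_subfield] by simp
  qed
  finally show ?thesis by (simp add: trace_balance_def N_def)
qed

section \<open>Fixed points of a map of prime power order\<close>

lemma self_in_orbit_if_funpow_eq:
  "(f ^^ n) x = x \<Longrightarrow> n > 0 \<Longrightarrow> x \<in> orbit f x"
  unfolding orbit_altdef by (metis (mono_tags, lifting) mem_Collect_eq)

lemma card_orbit_dvd:
  assumes "(f ^^ n) x = x" and "n > 0"
  shows "card (orbit f x) dvd n"
proof -
  have x: "x \<in> orbit f x" using assms by (rule self_in_orbit_if_funpow_eq)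
  define d where "d = funpow_dist1 f x x"
  have card: "card (orbit f x) = d"
    using orbit_conv_funpow_dist1[OF x] inj_on_funpow_dist1[OF x] by (simp add: card_image d_def)
  have "(f ^^ d) x = x" using funpow_dist1_prop[OF x] by (simp add: d_def)
  then have "(f ^^ (n mod d)) x = x" using assms(1) by (simp add: funpow_mod_eq)
  moreover have "n mod d < d" by (simp add: d_def)
  ultimately have "n mod d = 0" using funpow_dist1_least[of "n mod d" f x x] by (auto simp: d_def)
  then show ?thesis by (simp add: card mod_eq_0_iff_dvd)
qed

lemma card_mod_prime_eq_card_fixed_points:
  fixes \<phi> :: "'a \<Rightarrow> 'a"
  assumes l: "prime l" and "finite A" and "\<And>x. x \<in> A \<Longrightarrow> \<phi> x \<in> A"
    and "\<And>x. x \<in> A \<Longrightarrow> (\<phi> ^^ (l ^ k)) x = x"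
  shows "card A mod l = card {x\<in>A. \<phi> x = x} mod l"
  using assms(2-4)
proof (induction A rule: finite_psubset_induct)
  case (psubset A)
  have N: "l ^ k > 0" using l prime_gt_0_nat by simp
  show ?case
  proof (cases "\<forall>x\<in>A. \<phi> x = x")
    case True
    then have "{x\<in>A. \<phi> x = x} = A" by auto
    then show ?thesis by simp
  next
    case False
    then obtain x where x: "x \<in> A" "\<phi> x \<noteq> x" by auto
    have x_orbit: "x \<in> orbit \<phi> x"
      using psubset.prems(2)[OF x(1)] N by (rule self_in_orbit_if_funpow_eq)
    have "(\<phi> ^^ n) y \<in> A" if "y \<in> A" for n y
      using that psubset.prems(1) by (induction n) auto
    then have orbit_A: "orbit \<phi> x \<subseteq> A" using x(1) by (auto simp: orbit_altdef)
    have "card (orbit \<phi> x) dvd l ^ k"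
      using card_orbit_dvd[OF psubset.prems(2)[OF x(1)] N] .
    moreover have "card (orbit \<phi> x) \<noteq> 1"
      using x_orbit x(2) orbit_eq_singleton_iff[of \<phi> x] by (auto simp: card_1_singleton_iff)
    ultimately have dvd_orbit: "l dvd card (orbit \<phi> x)"
      using l by (auto simp: divides_primepow_nat)
    define B where "B = A - orbit \<phi> x"
    have "card A = card B + card (orbit \<phi> x)"
      using orbit_A psubset.hyps(1) by (simp add: B_def card_Diff_subset finite_subset card_mono)
    then have "card A mod l = card B mod l" using dvd_orbit by (auto elim!: dvdE)
    also have "\<dots> = card {y\<in>B. \<phi> y = y} mod l"
    proof (rule psubset.IH)
      show "B \<subset> A" using x(1) x_orbit by (auto simp: B_def)
      show "(\<phi> ^^ (l ^ k)) y = y" if "y \<in> B" for y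
        using that psubset.prems(2) by (simp add: B_def)
      show "\<phi> y \<in> B" if y: "y \<in> B" for y
      proof -
        have "y = (\<phi> ^^ (l ^ k - 1)) (\<phi> y)"
          using psubset.prems(2)[of y] y N
          by (simp add: B_def flip: funpow_Suc_right[unfolded comp_def, THEN fun_cong])
        then have "\<phi> y \<in> orbit \<phi> x \<Longrightarrow> y \<in> orbit \<phi> x" by (metis funpow_in_orbit)
        then show ?thesis using y psubset.prems(1) by (auto simp: B_def)
      qed
    qed
    also have "{y\<in>B. \<phi> y = y} = {y\<in>A. \<phi> y = y}"
    proof -
      have "\<phi> y \<noteq> y" if "y \<in> orbit \<phi> x" for y
      proof
        assume "\<phi> y = y"
        then have "orbit \<phi> y = {y}" by (simp add: orbit_eq_singleton_iff)
        then have "x = y" using orbit_swap[OF x_orbit that] by simp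
        with x(2) \<open>\<phi> y = y\<close> show False by simp
      qed
      then show ?thesis by (auto simp: B_def)
    qed
    finally show ?thesis .
  qed
qed

section \<open>Power maps\<close>

lemma power_prime_subfield_eq_self:
  assumes "[s = 1] (mod (CHAR('a) - 1))" and "s > 0" and "c \<in> prime_subfield"
  shows "(c::'a::finite_field) ^ s = c"
proof (cases "c = 0")
  case False
  have "(CHAR('a) - 1) dvd s - 1" using assms(1,2) by (simp add: cong_altdef_nat)
  then obtain t where "s - 1 = (CHAR('a) - 1) * t" by (rule dvdE)
  then have s: "s = 1 + (CHAR('a) - 1) * t" using assms(2) by simp
  have "c * c ^ (CHAR('a) - 1) = c * 1"
    using assms(3) prime_gt_0_nat[of "CHAR('a)"]
    by (simp add: prime_subfield_def flip: power_Suc)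
  then have "c ^ (CHAR('a) - 1) = 1" using False by simp
  then show ?thesis by (simp add: s power_add power_mult)
qed (use assms(2) in simp)

lemma fourier_coeff_power_eq_trace_balance:
  assumes "[s = 1] (mod (CHAR('a) - 1))" and "s > 0"
  shows "fourier_coeff (\<lambda>x. x ^ s) a = of_int (trace_balance (\<lambda>x::'a::finite_field. a * x + x ^ s))"
  unfolding fourier_coeff_def
  by (rule sum_can_char_homogeneous)
     (simp add: power_mult_distrib power_prime_subfield_eq_self[OF assms] algebra_simps)

lemma funpow_power: "((\<lambda>x::'a::monoid_mult. x ^ p) ^^ i) x = x ^ (p ^ i)"
  by (induction i) (simp_all add: mult.commute flip: power_mult)

lemma card_trace_level_mod_prime:
  assumes l: "prime l" and n: "field_degree TYPE('a) = l ^ k"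
    and s: "[s = 1] (mod (CHAR('a) - 1))" "s > 0"
  shows "card {x::'a::finite_field. abs_trace (x + x ^ s) = c} mod l
       = card {x\<in>prime_subfield. of_nat (2 * field_degree TYPE('a)) * x = c} mod l"
proof -
  have "abs_trace (x ^ CHAR('a) + (x ^ CHAR('a)) ^ s) = abs_trace (x + x ^ s)" for x :: 'a
  proof -
    have "(x ^ CHAR('a)) ^ s = (x ^ s) ^ CHAR('a)" by (simp add: mult.commute flip: power_mult)
    then have "x ^ CHAR('a) + (x ^ CHAR('a)) ^ s = (x + x ^ s) ^ CHAR('a)"
      by (simp add: freshmans_dream)
    then show ?thesis by (simp add: abs_trace_power_CHAR)
  qed
  moreover have "((\<lambda>x. x ^ CHAR('a)) ^^ (l ^ k)) x = x" for x :: 'a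
    using power_card_eq_same[of x] by (simp add: funpow_power n)
  ultimately have "card {x::'a. abs_trace (x + x ^ s) = c} mod l
      = card {x\<in>{x. abs_trace (x + x ^ s) = c}. x ^ CHAR('a) = x} mod l"
    by (intro card_mod_prime_eq_card_fixed_points[OF l]) simp_all
  also have "{x\<in>{x. abs_trace (x + x ^ s) = c}. x ^ CHAR('a) = x}
      = {x\<in>prime_subfield. of_nat (2 * field_degree TYPE('a)) * x = c}"
  proof -
    have "abs_trace (x + x ^ s) = of_nat (2 * field_degree TYPE('a)) * x"
      if "x \<in> prime_subfield" for x :: 'a
      using that abs_trace_prime_subfield[OF prime_subfield_add[OF that that]]
      by (simp add: power_prime_subfield_eq_self[OF s that] algebra_simps)
    then show ?thesis by (auto simp: prime_subfield_def)
  qed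
  finally show ?thesis .
qed

lemma prime_dvd_trace_balance_power:
  assumes l: "prime l" and n: "field_degree TYPE('a) = l ^ k"
    and s: "[s = 1] (mod (CHAR('a) - 1))" "s > 0" and p: "CHAR('a) \<noteq> 2"
  shows "int l dvd trace_balance (\<lambda>x::'a::finite_field. x + x ^ s)"
proof -
  define e :: 'a where "e = of_nat (2 * field_degree TYPE('a))"
  have e: "e \<in> prime_subfield" unfolding e_def by (rule of_nat_in_prime_subfield)
  have "card {x\<in>prime_subfield. e * x = 0} mod l = card {x\<in>prime_subfield. e * x = 1} mod l"
  proof (cases "e = 0")
    case False
    have level: "{x\<in>prime_subfield. e * x = c} = {c / e}" if "c \<in> prime_subfield" for c
      using False prime_subfield_mult[OF that prime_subfield_inverse[OF e]]
      by (auto simp: field_simps)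
    show ?thesis
      by (simp only: level[OF zero_in_prime_subfield] level[OF one_in_prime_subfield]) simp
  next
    case True
    then have "(of_nat (2 * l ^ k) :: 'a) = 0" by (simp only: e_def n)
    then have "CHAR('a) dvd 2 * l ^ k" by (simp only: of_nat_eq_0_iff_char_dvd)
    moreover have "\<not> CHAR('a) dvd 2"
      using p prime_ge_2_nat[of "CHAR('a)"] by (auto dest: dvd_imp_le)
    ultimately have "CHAR('a) dvd l"
      by (meson CHAR_prime prime_dvd_mult_iff prime_dvd_power)
    then have "CHAR('a) = l" using l by (simp add: primes_dvd_imp_eq)
    with True show ?thesis by (simp add: card_prime_subfield)
  qed
  then have "card {x::'a. abs_trace (x + x ^ s) = 0} mod l = card {x::'a. abs_trace (x + x ^ s) = 1} mod l"
    using card_trace_level_mod_prime[OF l n s] by (simp add: e_def)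
  then have "[int (card {x::'a. abs_trace (x + x ^ s) = 0}) = int (card {x::'a. abs_trace (x + x ^ s) = 1})] (mod int l)"
    by (subst cong_int_iff) (simp only: cong_def)
  then show ?thesis by (simp add: trace_balance_def cong_iff_dvd_diff)
qed

theorem mainTheorem4:
  fixes s k l :: nat
  assumes "CARD('a::finite_field) > 2"
    and "coprime s (CARD('a) - 1)"
    and "[s = 1] (mod (CHAR('a) - 1))"
    and "prime l"
    and "field_degree TYPE('a) = l ^ k"
    and "\<not> [CHAR('a) = 2] (mod l)"
  shows "\<exists>m::int. frakD (\<lambda>x::'a. x ^ s) = of_int (int l * m)"
proof -
  define W where "W a = trace_balance (\<lambda>x::'a. a * x + x ^ s)" for a
  have p: "CHAR('a) \<noteq> 2" using assms(6) by auto
  have "s > 0"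
  proof (rule ccontr)
    assume "\<not> s > 0"
    with assms(3) have "CHAR('a) - 1 = 1" by (simp add: cong_0_1_nat')
    with p show False by simp
  qed
  then have frakD: "frakD (\<lambda>x::'a. x ^ s) = of_int (\<Prod>a\<in>UNIV - {0}. W a)"
    using fourier_coeff_power_eq_trace_balance[OF assms(3)] by (simp add: frakD_def W_def)
  have "int l dvd W 1"
    using prime_dvd_trace_balance_power[OF assms(4,5,3) \<open>s > 0\<close> p] by (simp add: W_def)
  then have "int l dvd (\<Prod>a\<in>UNIV - {0}. W a)"
    by (rule dvd_trans) (rule dvd_prodI; simp)
  then obtain m where "(\<Prod>a\<in>UNIV - {0}. W a) = int l * m" by (rule dvdE)
  then show ?thesis by (intro exI[of _ m]) (simp only: frakD)
qed

end
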